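(* For $n=0,1,2,\ldots$ let $R_n=\sum_{k=0}^n\binom{n}{k}\binom{n+k}{k}\frac{1}{2k-1}$. Then $\lim_{n\to\infty}\frac{R_{n+1}}{R_n}=3+2\sqrt{2}$. *)

theory Defs
  imports Complex_Main
begin

definition R :: "nat \<Rightarrow> real" where
  "R n = (\<Sum>k=0..n. real (n choose k) * real ((n + k) choose k) / (2 * real k - 1))"

end

theory Submission
  imports Defs "HOL-Real_Asymp.Real_Asymp"
begin

text \<open>The products \<open>C(n,k) C(n+k,k)\<close> in \<open>R n\<close> are the summands of the central Delannoy numbers
\<open>D n\<close>, which satisfy \<open>(n+2) D (n+2) = (6n+9) D (n+1) - (n+1) D n\<close>; hence \<open>D (n+1) / D n\<close> tends
to the attracting fixed point \<open>3 + 2\<surd>2\<close> of \<open>x \<mapsto> 6 - 1/x\<close>. Comparing \<open>R (n+1)\<close> with \<open>R n\<close>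
summand by summand gives \<open>(2n+1) R (n+1) = (2n+3) R n + D n + D (n+1)\<close>, so \<open>R n / (2n+1)\<close> is,
up to a constant, a partial sum of a positive series whose term ratios also tend to
\<open>3 + 2\<surd>2 > 1\<close>; such partial sums have the same limiting ratio.\<close>

section \<open>Limits of ratios\<close>

lemma tendsto_zero_by_contraction:
  fixes x e :: "nat \<Rightarrow> real"
  assumes \<theta>: "0 \<le> \<theta>" "\<theta> < 1" and e: "e \<longlonglongrightarrow> 0"
    and contr: "eventually (\<lambda>n. \<bar>x (Suc n)\<bar> \<le> \<theta> * \<bar>x n\<bar> + \<bar>e n\<bar>) sequentially"
  shows "x \<longlonglongrightarrow> 0"
proof (rule LIMSEQ_I)
  fix r :: real
  assume r: "0 < r"
  define \<delta> where "\<delta> = r * (1 - \<theta>) / 2"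
  have "0 < \<delta>"
    using r \<theta> by (simp add: \<delta>_def)
  then obtain N1 where N1: "\<And>n. n \<ge> N1 \<Longrightarrow> \<bar>e n\<bar> < \<delta>"
    using LIMSEQ_D[OF e] by auto
  obtain N2 where N2: "\<And>n. n \<ge> N2 \<Longrightarrow> \<bar>x (Suc n)\<bar> \<le> \<theta> * \<bar>x n\<bar> + \<bar>e n\<bar>"
    using contr by (auto simp: eventually_sequentially)
  define N where "N = max N1 N2"
  \<comment> \<open>Beyond \<open>N\<close> the errors add up to at most the geometric sum \<open>\<delta> / (1 - \<theta>) = r / 2\<close>.\<close>
  have bound: "\<bar>x (N + m)\<bar> \<le> \<theta> ^ m * \<bar>x N\<bar> + r / 2" for m
  proof (induction m)
    case 0
    then show ?case
      using r by simp
  next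
    case (Suc m)
    have "\<bar>x (N + Suc m)\<bar> \<le> \<theta> * \<bar>x (N + m)\<bar> + \<delta>"
      using N1[of "N + m"] N2[of "N + m"] by (fastforce simp: N_def)
    also have "\<dots> \<le> \<theta> * (\<theta> ^ m * \<bar>x N\<bar> + r / 2) + \<delta>"
      using Suc.IH \<theta> by (simp add: mult_left_mono)
    also have "\<dots> = \<theta> ^ Suc m * \<bar>x N\<bar> + r / 2"
      by (simp add: \<delta>_def field_simps)
    finally show ?case .
  qed
  have "(\<lambda>m. \<theta> ^ m * \<bar>x N\<bar>) \<longlonglongrightarrow> 0"
    using \<theta> by (intro tendsto_mult_left_zero LIMSEQ_power_zero) simp
  then obtain M where M: "\<And>m. m \<ge> M \<Longrightarrow> \<bar>\<theta> ^ m * \<bar>x N\<bar>\<bar> < r / 2"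
    using r by (metis (no_types, lifting) LIMSEQ_D diff_zero half_gt_zero real_norm_def)
  have "norm (x n - 0) < r" if "n \<ge> N + M" for n
  proof -
    have "M \<le> n - N"
      using that by simp
    then have "\<theta> ^ (n - N) * \<bar>x N\<bar> < r / 2"
      using M abs_ge_self le_less_trans by blast
    then show ?thesis
      using bound[of "n - N"] that by simp
  qed
  then show "\<exists>n0. \<forall>n\<ge>n0. norm (x n - 0) < r"
    by blast
qed

lemma ratio_tendsto_add_Suc:
  fixes f :: "nat \<Rightarrow> real"
  assumes pos: "\<And>n. 0 < f n" and ratio: "(\<lambda>n. f (Suc n) / f n) \<longlonglongrightarrow> L"
  shows "(\<lambda>n. (f (Suc n) + f (Suc (Suc n))) / (f n + f (Suc n))) \<longlonglongrightarrow> L"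
proof -
  define q where "q n = f (Suc n) / f n" for n
  have "0 \<le> L"
    by (rule tendsto_lowerbound[OF ratio])
      (use pos in \<open>auto intro!: always_eventually divide_nonneg_nonneg less_imp_le\<close>)
  have eq: "(f (Suc n) + f (Suc (Suc n))) / (f n + f (Suc n)) = q n * (1 + q (Suc n)) / (1 + q n)" for n
  proof -
    have "q n * (1 + q (Suc n)) = (f (Suc n) + f (Suc (Suc n))) / f n"
      and "1 + q n = (f n + f (Suc n)) / f n"
      using pos[of n] pos[of "Suc n"] by (simp_all add: q_def field_simps)
    then show ?thesis
      using pos[of n] by simp
  qed
  have "(\<lambda>n. q n * (1 + q (Suc n)) / (1 + q n)) \<longlonglongrightarrow> L * (1 + L) / (1 + L)"
    using ratio \<open>0 \<le> L\<close> unfolding q_def by (intro tendsto_intros LIMSEQ_Suc) auto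
  then show ?thesis
    using \<open>0 \<le> L\<close> by (simp add: eq)
qed

lemma ratio_tendsto_partial_sums:
  fixes u S :: "nat \<Rightarrow> real"
  assumes u_pos: "\<And>n. 0 < u n" and S_Suc: "\<And>n. S (Suc n) = S n + u n" and "0 < S 1"
    and ratio: "(\<lambda>n. u (Suc n) / u n) \<longlonglongrightarrow> L" and "1 < L"
  shows "(\<lambda>n. S (Suc n) / S n) \<longlonglongrightarrow> L"
proof -
  have S_pos: "0 < S (Suc n)" for n
    by (induction n) (use \<open>0 < S 1\<close> u_pos in \<open>auto simp: S_Suc add_pos_pos\<close>)
  define \<rho> where "\<rho> n = u (Suc n) / u n" for n
  define w where "w n = S (Suc n) / u n" for n
  define W where "W = L / (L - 1)"
  have W_fixed: "1 - W = - W / L"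
    using \<open>1 < L\<close> by (simp add: W_def field_simps)
  have \<rho>_pos: "0 < \<rho> n" for n
    using u_pos by (simp add: \<rho>_def)
  have w_Suc: "w (Suc n) = 1 + w n / \<rho> n" for n
    using u_pos[of n] u_pos[of "Suc n"] by (simp add: w_def \<rho>_def S_Suc field_simps)
  \<comment> \<open>\<open>W\<close> is the fixed point of \<open>w \<mapsto> 1 + w / L\<close>, which contracts since \<open>\<rho> n\<close> eventually exceeds \<open>(1 + L) / 2 > 1\<close>.\<close>
  have "eventually (\<lambda>n. (1 + L) / 2 < \<rho> n) sequentially"
    using ratio \<open>1 < L\<close> unfolding \<rho>_def by (intro order_tendstoD) auto
  then have contr: "eventually (\<lambda>n. \<bar>w (Suc n) - W\<bar> \<le> 2 / (1 + L) * \<bar>w n - W\<bar> + \<bar>W * (1 / \<rho> n - 1 / L)\<bar>) sequentially"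
  proof eventually_elim
    case (elim n)
    have "w (Suc n) - W = (1 - W) + w n / \<rho> n"
      by (simp add: w_Suc)
    also have "\<dots> = (w n - W) / \<rho> n + W * (1 / \<rho> n - 1 / L)"
      unfolding W_fixed by (simp add: diff_divide_distrib algebra_simps)
    also have "\<bar>\<dots>\<bar> \<le> \<bar>w n - W\<bar> / \<rho> n + \<bar>W * (1 / \<rho> n - 1 / L)\<bar>"
      using abs_triangle_ineq[of "(w n - W) / \<rho> n" "W * (1 / \<rho> n - 1 / L)"] \<rho>_pos[of n]
      by (simp add: abs_divide)
    also have "\<bar>w n - W\<bar> / \<rho> n \<le> \<bar>w n - W\<bar> / ((1 + L) / 2)"
      using elim \<open>1 < L\<close> by (intro divide_left_mono) auto
    also have "\<dots> = 2 / (1 + L) * \<bar>w n - W\<bar>"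
      by simp
    finally show ?case
      by simp
  qed
  have "(\<lambda>n. W * (1 / \<rho> n - 1 / L)) \<longlonglongrightarrow> W * (1 / L - 1 / L)"
    using ratio \<open>1 < L\<close> unfolding \<rho>_def by (intro tendsto_intros) auto
  then have "(\<lambda>n. W * (1 / \<rho> n - 1 / L)) \<longlonglongrightarrow> 0"
    by simp
  from tendsto_zero_by_contraction[where x = "\<lambda>n. w n - W", OF _ _ this contr]
  have w: "w \<longlonglongrightarrow> W"
    using \<open>1 < L\<close> by (auto intro: LIM_zero_cancel)
  have "S (Suc (Suc n)) / S (Suc n) = 1 + \<rho> n / w n" for n
    using u_pos[of n] u_pos[of "Suc n"] S_pos[of n]
    by (simp add: \<rho>_def w_def S_Suc[of "Suc n"] field_simps)
  moreover have "(\<lambda>n. 1 + \<rho> n / w n) \<longlonglongrightarrow> 1 + L / W"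
    using ratio w \<open>1 < L\<close> unfolding \<rho>_def W_def by (intro tendsto_intros) auto
  moreover have "1 + L / W = L"
    using \<open>1 < L\<close> by (simp add: W_def)
  ultimately have "(\<lambda>n. S (Suc (Suc n)) / S (Suc n)) \<longlonglongrightarrow> L"
    by simp
  then show ?thesis
    by (rule LIMSEQ_imp_Suc)
qed

section \<open>Central Delannoy numbers\<close>

definition delannoy_term :: "nat \<Rightarrow> nat \<Rightarrow> nat" where
  "delannoy_term n k = (n choose k) * ((n + k) choose k)"

definition central_delannoy :: "nat \<Rightarrow> nat" where
  "central_delannoy n = (\<Sum>k\<le>n. delannoy_term n k)"

lemma delannoy_term_eq_0: "n < k \<Longrightarrow> delannoy_term n k = 0"
  by (simp add: delannoy_term_def)

lemma delannoy_term_0 [simp]: "delannoy_term n 0 = 1"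
  by (simp add: delannoy_term_def)

lemma delannoy_term_mono: "delannoy_term n k \<le> delannoy_term (Suc n) k"
  unfolding delannoy_term_def by (intro mult_mono binomial_right_mono) auto

lemma delannoy_term_Suc_left:
  "(Suc n - k) * delannoy_term (Suc n) k = (Suc n + k) * delannoy_term n k"
proof -
  have 1: "(Suc n - k) * (Suc n choose k) = Suc n * (n choose k)"
    using binomial_absorb_comp[of "Suc n" k] by simp
  have 2: "Suc n * ((Suc n + k) choose k) = (Suc n + k) * ((n + k) choose k)"
    using binomial_absorb_comp[of "Suc n + k" k] by simp
  show ?thesis
    unfolding delannoy_term_def
    by (metis (no_types, lifting) 1 2 mult.assoc mult.left_commute)
qed

lemma delannoy_term_Suc_right:
  "(Suc k)\<^sup>2 * delannoy_term n (Suc k) = (n - k) * (n + Suc k) * delannoy_term n k"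
proof -
  have 1: "Suc k * (n choose Suc k) = (n - k) * (n choose k)"
    by (metis binomial_absorb_comp binomial_absorption)
  have 2: "Suc k * ((n + Suc k) choose Suc k) = (n + Suc k) * ((n + k) choose k)"
    using Suc_times_binomial[of k "n + k"] by simp
  show ?thesis
    unfolding delannoy_term_def power2_eq_square
    by (metis (no_types, lifting) 1 2 add_Suc_right mult.assoc mult.left_commute)
qed

lemma sum_delannoy_term_eq:
  "n \<le> m \<Longrightarrow> (\<Sum>k\<le>m. delannoy_term n k) = central_delannoy n"
  unfolding central_delannoy_def
  by (rule sum.mono_neutral_right) (auto simp: delannoy_term_eq_0)

lemma delannoy_term_Suc_left_real:
  "(real n + 1 - real k) * delannoy_term (Suc n) k = (real n + 1 + real k) * delannoy_term n k"
proof (cases "k \<le> Suc n")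
  case True
  have "real (Suc n - k) * delannoy_term (Suc n) k = real (Suc n + k) * delannoy_term n k"
    by (metis delannoy_term_Suc_left of_nat_mult)
  with True show ?thesis
    by (simp add: of_nat_diff ac_simps)
qed (simp add: delannoy_term_eq_0)

lemma delannoy_term_Suc_right_real:
  "(real k + 1)\<^sup>2 * delannoy_term n (Suc k) = (real n - real k) * (real n + real k + 1) * delannoy_term n k"
proof (cases "k \<le> n")
  case True
  have "real ((Suc k)\<^sup>2) * delannoy_term n (Suc k) = real (n - k) * real (n + Suc k) * delannoy_term n k"
    by (metis delannoy_term_Suc_right of_nat_mult)
  with True show ?thesis
    by (simp add: of_nat_diff algebra_simps)
qed (simp add: delannoy_term_eq_0)

lemma delannoy_term_recurrence_Suc_le:
  assumes "k \<le> n"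
  shows "(n + 2) * delannoy_term (n + 2) (Suc k) + (n + 1) * delannoy_term n (Suc k)
       = (2 * n + 3) * delannoy_term (n + 1) (Suc k) + (4 * n + 6) * delannoy_term (n + 1) k"
proof -
  define X Y c Z where "X = real (delannoy_term (n + 2) (Suc k))"
    and "Y = real (delannoy_term n (Suc k))" and "c = real (delannoy_term (n + 1) (Suc k))"
    and "Z = real (delannoy_term (n + 1) k)"
  define a b where "a = real n + 1 - real k" and "b = real n + 2 + real k"
  have X: "a * X = (b + 1) * c"
    using delannoy_term_Suc_left_real[of "n + 1" "Suc k"]
    by (simp add: X_def c_def a_def b_def algebra_simps)
  have Y: "(a - 1) * c = b * Y"
    using delannoy_term_Suc_left_real[of n "Suc k"]
    by (simp add: Y_def c_def a_def b_def algebra_simps)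
  have Z: "(real k + 1)\<^sup>2 * c = a * b * Z"
    using delannoy_term_Suc_right_real[of k "n + 1"]
    by (simp add: Z_def c_def a_def b_def algebra_simps)
  have ab: "a > 0" "b > 0"
    using assms by (simp_all add: a_def b_def)
  have "a * b * ((real n + 2) * X + (real n + 1) * Y)
      = a * b * ((2 * real n + 3) * c + (4 * real n + 6) * Z)"
  proof -
    have "a * b * ((real n + 2) * X + (real n + 1) * Y)
        = (real n + 2) * b * (a * X) + (real n + 1) * a * (b * Y)"
      by (simp add: algebra_simps)
    also have "\<dots> = (real n + 2) * b * (b + 1) * c + (real n + 1) * a * (a - 1) * c"
      by (simp add: X flip: Y)
    also have "\<dots> = a * b * (2 * real n + 3) * c + (4 * real n + 6) * ((real k + 1)\<^sup>2 * c)"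
      by (simp add: a_def b_def algebra_simps power2_eq_square)
    also have "\<dots> = a * b * ((2 * real n + 3) * c + (4 * real n + 6) * Z)"
      unfolding Z by (simp add: algebra_simps)
    finally show ?thesis .
  qed
  then have "(real n + 2) * X + (real n + 1) * Y = (2 * real n + 3) * c + (4 * real n + 6) * Z"
    using ab by simp
  then have "real ((n + 2) * delannoy_term (n + 2) (Suc k) + (n + 1) * delannoy_term n (Suc k))
      = real ((2 * n + 3) * delannoy_term (n + 1) (Suc k) + (4 * n + 6) * delannoy_term (n + 1) k)"
    unfolding X_def Y_def c_def Z_def by (simp add: algebra_simps)
  then show ?thesis
    by (simp only: of_nat_eq_iff)
qed

lemma delannoy_term_recurrence_Suc:
  "(n + 2) * delannoy_term (n + 2) (Suc k) + (n + 1) * delannoy_term n (Suc k)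
     = (2 * n + 3) * delannoy_term (n + 1) (Suc k) + (4 * n + 6) * delannoy_term (n + 1) k"
proof -
  consider "k \<le> n" | "k = n + 1" | "n + 1 < k"
    by linarith
  then show ?thesis
  proof cases
    case 1
    then show ?thesis
      by (rule delannoy_term_recurrence_Suc_le)
  next
    case 2
    have "(real n + 2)\<^sup>2 * delannoy_term (n + 2) (n + 2) = (2 * real n + 4) * delannoy_term (n + 2) (n + 1)"
      using delannoy_term_Suc_right_real[of "n + 1" "n + 2"] by (simp add: algebra_simps)
    also have "delannoy_term (n + 2) (n + 1) = (2 * real n + 3) * delannoy_term (n + 1) (n + 1)"
      using delannoy_term_Suc_left_real[of "n + 1" "n + 1"] by (simp add: algebra_simps)
    finally have "(real n + 2) * ((real n + 2) * delannoy_term (n + 2) (n + 2))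
        = (real n + 2) * ((4 * real n + 6) * delannoy_term (n + 1) (n + 1))"
      by (simp add: power2_eq_square algebra_simps)
    then have "(real n + 2) * delannoy_term (n + 2) (n + 2) = (4 * real n + 6) * delannoy_term (n + 1) (n + 1)"
      by simp
    then have "real ((n + 2) * delannoy_term (n + 2) (n + 2)) = real ((4 * n + 6) * delannoy_term (n + 1) (n + 1))"
      by (simp add: algebra_simps)
    then show ?thesis
      using 2 by (simp only: of_nat_eq_iff) (simp add: delannoy_term_eq_0)
  next
    case 3
    then show ?thesis
      by (simp add: delannoy_term_eq_0)
  qed
qed

lemma central_delannoy_recurrence:
  "(n + 2) * central_delannoy (n + 2) + (n + 1) * central_delannoy n = (6 * n + 9) * central_delannoy (n + 1)"
proof -
  let ?t = delannoy_term
  have sums: "central_delannoy m = (\<Sum>k\<le>Suc (n + 1). ?t m k)" if "m \<le> n + 2" for m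
    using that by (simp only: sum_delannoy_term_eq)
  have shift: "(\<Sum>k\<le>Suc (n + 1). ?t (n + 1) k) = 1 + (\<Sum>k\<le>n + 1. ?t (n + 1) (Suc k))"
    by (simp only: sum.atMost_Suc_shift delannoy_term_0)
  have "(n + 2) * central_delannoy (n + 2) + (n + 1) * central_delannoy n
      = (\<Sum>k\<le>Suc (n + 1). (n + 2) * ?t (n + 2) k + (n + 1) * ?t n k)"
    by (simp only: sums sum.distrib sum_distrib_left)
  also have "\<dots> = (2 * n + 3) + (\<Sum>k\<le>n + 1. (2 * n + 3) * ?t (n + 1) (Suc k) + (4 * n + 6) * ?t (n + 1) k)"
    by (simp only: sum.atMost_Suc_shift delannoy_term_recurrence_Suc) simp
  also have "\<dots> = (2 * n + 3) * (\<Sum>k\<le>Suc (n + 1). ?t (n + 1) k) + (4 * n + 6) * central_delannoy (n + 1)"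
    by (simp only: shift sum.distrib sum_distrib_left central_delannoy_def distrib_left mult_1_right)
  also have "\<dots> = (6 * n + 9) * central_delannoy (n + 1)"
    by (simp only: sums[of "n + 1", symmetric]) (simp add: algebra_simps)
  finally show ?thesis .
qed

lemma central_delannoy_mono: "central_delannoy n \<le> central_delannoy (Suc n)"
proof -
  have "central_delannoy n \<le> (\<Sum>k\<le>Suc n. delannoy_term n k)"
    by (simp add: sum_delannoy_term_eq)
  also have "\<dots> \<le> central_delannoy (Suc n)"
    unfolding central_delannoy_def by (intro sum_mono delannoy_term_mono)
  finally show ?thesis .
qed

lemma central_delannoy_pos: "0 < central_delannoy n"
proof -
  have "delannoy_term n 0 \<le> central_delannoy n"
    unfolding central_delannoy_def by (rule member_le_sum) auto
  then show ?thesis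
    by simp
qed

lemma three_minus_two_sqrt_2_pos: "0 < 3 - 2 * sqrt (2 :: real)"
proof -
  have "sqrt 2 < (3 / 2 :: real)"
    by (rule real_less_lsqrt) (simp_all add: power2_eq_square)
  then show ?thesis
    by simp
qed

definition delannoy_ratio :: "nat \<Rightarrow> real" where
  "delannoy_ratio n = central_delannoy (Suc n) / central_delannoy n"

lemma delannoy_ratio_ge_1: "1 \<le> delannoy_ratio n"
  using central_delannoy_mono[of n] central_delannoy_pos[of n] by (simp add: delannoy_ratio_def)

lemma delannoy_ratio_Suc:
  "(real n + 2) * delannoy_ratio (Suc n) = 6 * real n + 9 - (real n + 1) / delannoy_ratio n"
proof -
  have "(real n + 2) * central_delannoy (n + 2) + (real n + 1) * central_delannoy n
      = (6 * real n + 9) * central_delannoy (n + 1)"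
    using arg_cong[OF central_delannoy_recurrence[of n], of real] by (simp add: algebra_simps)
  then show ?thesis
    using central_delannoy_pos[of n] central_delannoy_pos[of "Suc n"]
    by (simp add: delannoy_ratio_def field_simps)
qed

lemma delannoy_ratio_Suc_minus_limit:
  fixes n :: nat
  defines "q \<equiv> delannoy_ratio n" and "L \<equiv> 3 + 2 * sqrt 2"
  shows "delannoy_ratio (Suc n) - L = ((real n + 1) * (3 - 2 * sqrt 2) * (q - L) / q - 2 * sqrt 2) / (real n + 2)"
proof -
  have "1 \<le> q"
    unfolding q_def by (rule delannoy_ratio_ge_1)
  have "(real n + 2) * delannoy_ratio (Suc n) * q = (6 * real n + 9) * q - (real n + 1)"
    using delannoy_ratio_Suc[of n] \<open>1 \<le> q\<close> by (simp add: q_def field_simps)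
  \<comment> \<open>The constant terms cancel because \<open>(3 + 2\<surd>2) (3 - 2\<surd>2) = 1\<close>.\<close>
  then have "(real n + 2) * (delannoy_ratio (Suc n) - L) * q = (real n + 1) * (3 - 2 * sqrt 2) * (q - L) - 2 * sqrt 2 * q"
    by (simp add: L_def algebra_simps)
  then have "(real n + 2) * (delannoy_ratio (Suc n) - L) = (real n + 1) * (3 - 2 * sqrt 2) * (q - L) / q - 2 * sqrt 2"
    using \<open>1 \<le> q\<close> by (simp add: field_simps)
  then show ?thesis
    by (simp add: eq_divide_eq mult.commute)
qed

lemma delannoy_ratio_dist_Suc:
  fixes n :: nat
  defines "q \<equiv> delannoy_ratio n" and "L \<equiv> 3 + 2 * sqrt 2"
  shows "\<bar>delannoy_ratio (Suc n) - L\<bar> \<le> (3 - 2 * sqrt 2) * \<bar>q - L\<bar> + 2 * sqrt 2 / (real n + 2)"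
proof -
  define a where "a = (real n + 1) / ((real n + 2) * q)"
  have "1 \<le> q"
    unfolding q_def by (rule delannoy_ratio_ge_1)
  have "a \<le> 1"
    using \<open>1 \<le> q\<close> mult_mono[OF _ \<open>1 \<le> q\<close>, of "real n + 1" "real n + 2"] by (simp add: a_def)
  have "0 \<le> a"
    using \<open>1 \<le> q\<close> by (simp add: a_def)
  have "delannoy_ratio (Suc n) - L = a * (3 - 2 * sqrt 2) * (q - L) - 2 * sqrt 2 / (real n + 2)"
    unfolding delannoy_ratio_Suc_minus_limit[of n, folded q_def L_def] a_def
    by (simp add: diff_divide_distrib)
  also have "\<bar>\<dots>\<bar> \<le> a * (3 - 2 * sqrt 2) * \<bar>q - L\<bar> + 2 * sqrt 2 / (real n + 2)"
    using abs_triangle_ineq4[of "a * (3 - 2 * sqrt 2) * (q - L)" "2 * sqrt 2 / (real n + 2)"]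
      \<open>0 \<le> a\<close> three_minus_two_sqrt_2_pos by (simp add: abs_mult)
  also have "\<dots> \<le> (3 - 2 * sqrt 2) * \<bar>q - L\<bar> + 2 * sqrt 2 / (real n + 2)"
    using mult_right_mono[OF \<open>a \<le> 1\<close> abs_ge_zero, of "q - L"] three_minus_two_sqrt_2_pos
    by (simp add: mult.assoc mult.left_commute[of a])
  finally show ?thesis .
qed

lemma central_delannoy_ratio:
  "(\<lambda>n. real (central_delannoy (Suc n)) / real (central_delannoy n)) \<longlonglongrightarrow> 3 + 2 * sqrt 2"
proof -
  have \<theta>: "0 \<le> 3 - 2 * sqrt (2 :: real)" "3 - 2 * sqrt (2 :: real) < 1"
    using three_minus_two_sqrt_2_pos by simp_all
  have error: "(\<lambda>n. 2 * sqrt 2 / (real n + 2)) \<longlonglongrightarrow> 0"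
    by real_asymp
  have "\<bar>delannoy_ratio (Suc n) - (3 + 2 * sqrt 2)\<bar>
      \<le> (3 - 2 * sqrt 2) * \<bar>delannoy_ratio n - (3 + 2 * sqrt 2)\<bar> + \<bar>2 * sqrt 2 / (real n + 2)\<bar>" for n
    using delannoy_ratio_dist_Suc[of n] abs_ge_self[of "2 * sqrt 2 / (real n + 2)"] by linarith
  then have "(\<lambda>n. delannoy_ratio n - (3 + 2 * sqrt 2)) \<longlonglongrightarrow> 0"
    by (intro tendsto_zero_by_contraction[OF \<theta> error always_eventually] allI)
  then show ?thesis
    unfolding delannoy_ratio_def by (rule LIM_zero_cancel)
qed

section \<open>The sequence \<open>R\<close>\<close>

lemma R_eq_sum_delannoy_term:
  "n \<le> m \<Longrightarrow> R n = (\<Sum>k\<le>m. delannoy_term n k / (2 * real k - 1))"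
  unfolding R_def atLeast0AtMost delannoy_term_def of_nat_mult
  by (rule sum.mono_neutral_left) auto

lemma R_recurrence:
  "(2 * real n + 1) * R (Suc n) = (2 * real n + 3) * R n + central_delannoy n + central_delannoy (Suc n)"
proof -
  let ?t = delannoy_term
  have summand: "(2 * real n + 1) * (?t (Suc n) k / (2 * real k - 1))
      = (2 * real n + 3) * (?t n k / (2 * real k - 1)) + ?t n k + ?t (Suc n) k" for k
  proof -
    have "real (2 * k) \<noteq> real 1"
      by (simp only: of_nat_eq_iff) presburger
    then have "2 * real k - 1 \<noteq> 0"
      by simp
    moreover have "(real n + 1 - real k) * ?t (Suc n) k = (real n + 1 + real k) * ?t n k"
      by (rule delannoy_term_Suc_left_real)
    ultimately show ?thesis
      by (simp add: field_simps)
  qed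
  have "(2 * real n + 1) * R (Suc n) = (\<Sum>k\<le>Suc n. (2 * real n + 1) * (?t (Suc n) k / (2 * real k - 1)))"
    unfolding R_eq_sum_delannoy_term[OF order_refl] sum_distrib_left ..
  also have "\<dots> = (\<Sum>k\<le>Suc n. (2 * real n + 3) * (?t n k / (2 * real k - 1)) + ?t n k + ?t (Suc n) k)"
    by (simp only: summand)
  also have "\<dots> = (2 * real n + 3) * R n + central_delannoy n + central_delannoy (Suc n)"
  proof -
    have "R n = (\<Sum>k\<le>Suc n. ?t n k / (2 * real k - 1))"
      by (rule R_eq_sum_delannoy_term) simp
    moreover have "real (central_delannoy m) = (\<Sum>k\<le>Suc n. real (?t m k))" if "m \<le> Suc n" for m
      using that by (simp only: sum_delannoy_term_eq flip: of_nat_sum)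
    ultimately show ?thesis
      by (simp only: sum.distrib sum_distrib_left order_refl le_SucI)
  qed
  finally show ?thesis .
qed

definition R_increment :: "nat \<Rightarrow> real" where
  "R_increment n = (real (central_delannoy n) + central_delannoy (Suc n)) / ((2 * real n + 1) * (2 * real n + 3))"

lemma R_div_odd_Suc: "R (Suc n) / (2 * real (Suc n) + 1) = R n / (2 * real n + 1) + R_increment n"
proof -
  have "R (Suc n) / (2 * real (Suc n) + 1) = (2 * real n + 1) * R (Suc n) / ((2 * real n + 1) * (2 * real n + 3))"
    by (simp add: add_ac)
  also have "\<dots> = R n / (2 * real n + 1) + R_increment n"
    unfolding R_recurrence by (simp add: R_increment_def add_divide_distrib)
  finally show ?thesis .
qed

lemma R_increment_pos: "0 < R_increment n"
  using central_delannoy_pos[of n] by (simp add: R_increment_def add_pos_pos)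

lemma R_increment_ratio: "(\<lambda>n. R_increment (Suc n) / R_increment n) \<longlonglongrightarrow> 3 + 2 * sqrt 2"
proof -
  let ?D = "\<lambda>n. real (central_delannoy n)"
  have "(\<lambda>n. (?D (Suc n) + ?D (Suc (Suc n))) / (?D n + ?D (Suc n))) \<longlonglongrightarrow> 3 + 2 * sqrt 2"
    using central_delannoy_pos by (intro ratio_tendsto_add_Suc[OF _ central_delannoy_ratio]) simp
  moreover have "(\<lambda>n. (2 * real n + 1) / (2 * real n + 5)) \<longlonglongrightarrow> 1"
    by real_asymp
  ultimately have "(\<lambda>n. (?D (Suc n) + ?D (Suc (Suc n))) / (?D n + ?D (Suc n)) * ((2 * real n + 1) / (2 * real n + 5)))
      \<longlonglongrightarrow> (3 + 2 * sqrt 2) * 1"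
    by (rule tendsto_mult)
  moreover have "R_increment (Suc n) / R_increment n
      = (?D (Suc n) + ?D (Suc (Suc n))) / (?D n + ?D (Suc n)) * ((2 * real n + 1) / (2 * real n + 5))" for n
    using central_delannoy_pos[of n] central_delannoy_pos[of "Suc n"]
    by (simp add: R_increment_def divide_simps add_pos_pos) (simp add: algebra_simps)
  ultimately show ?thesis
    by simp
qed

theorem theorem4p2:
  shows "(\<lambda>n. R (Suc n) / R n) \<longlonglongrightarrow> 3 + 2 * sqrt 2"
proof -
  define T where "T n = R n / (2 * real n + 1)" for n
  have "0 < T 1"
    by (simp add: T_def R_def)
  have "(\<lambda>n. T (Suc n) / T n) \<longlonglongrightarrow> 3 + 2 * sqrt 2"
    using R_increment_pos R_div_odd_Suc[folded T_def] \<open>0 < T 1\<close> R_increment_ratio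
    by (rule ratio_tendsto_partial_sums) (simp add: add_pos_pos)
  moreover have "(\<lambda>n. (2 * real (Suc n) + 1) / (2 * real n + 1)) \<longlonglongrightarrow> 1"
    by real_asymp
  ultimately have "(\<lambda>n. (2 * real (Suc n) + 1) / (2 * real n + 1) * (T (Suc n) / T n)) \<longlonglongrightarrow> 1 * (3 + 2 * sqrt 2)"
    by (intro tendsto_mult)
  moreover have "R n = (2 * real n + 1) * T n" for n
    by (simp add: T_def)
  ultimately show ?thesis
    by (simp add: times_divide_times_eq)
qed

end
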